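(* Let $k\ge 1$. For every $\epsilon>0$ there is $\eta>0$ such that for all sufficiently large $n$ the following holds. If $H$ is a $2k$-uniform hypergraph on $n$ vertices containing no copy of ${\cal C}^{(2k)}_3$ with $e(H)>\frac12\binom{n}{2k}-\eta n^{2k}$, then there is a partition $V(H)=V_1\cup V_2$ such that all but at most $\epsilon n^{2k}$ of the $2k$-element subsets of $V(H)$ are correct with respect to this partition.
   Context: ${\cal C}^{(2k)}_3$ is the $2k$-uniform hypergraph obtained by taking pairwise disjoint sets $P_1,P_2,P_3$ each of size $k$ with edges $P_1\cup P_2$, $P_2\cup P_3$, $P_3\cup P_1$. Given a partition $V(H)=V_1\cup V_2$, a $2k$-set is good if it intersects each $V_i$ in an odd number of elements, and bad otherwise; it is correct (with respect to $H$) if it is either a good edge of $H$ or a bad non-edge of $H$, and incorrect otherwise. *)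

theory Defs
  imports Complex_Main
begin

definition uniform_hypergraph :: "nat \<Rightarrow> 'a set \<Rightarrow> 'a set set \<Rightarrow> bool" where
  "uniform_hypergraph r V E \<longleftrightarrow> finite V \<and> (\<forall>S\<in>E. S \<subseteq> V \<and> card S = r)"

definition contains_C3 :: "nat \<Rightarrow> 'a set \<Rightarrow> 'a set set \<Rightarrow> bool" where
  "contains_C3 k V E \<longleftrightarrow> (\<exists>P1 P2 P3. P1 \<subseteq> V \<and> P2 \<subseteq> V \<and> P3 \<subseteq> V \<and>
     card P1 = k \<and> card P2 = k \<and> card P3 = k \<and>
     P1 \<inter> P2 = {} \<and> P2 \<inter> P3 = {} \<and> P3 \<inter> P1 = {} \<and>
     P1 \<union> P2 \<in> E \<and> P2 \<union> P3 \<in> E \<and> P3 \<union> P1 \<in> E)"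

definition good_set :: "'a set \<Rightarrow> 'a set \<Rightarrow> 'a set \<Rightarrow> bool" where
  "good_set V1 V2 S \<longleftrightarrow> odd (card (S \<inter> V1)) \<and> odd (card (S \<inter> V2))"

definition correct_set :: "'a set set \<Rightarrow> 'a set \<Rightarrow> 'a set \<Rightarrow> 'a set \<Rightarrow> bool" where
  "correct_set E V1 V2 S \<longleftrightarrow> (S \<in> E \<and> good_set V1 V2 S) \<or> (S \<notin> E \<and> \<not> good_set V1 V2 S)"

end

(* Call k-sets C and D adjacent when C \<inter> D = {} and C \<union> D \<in> E. A triangle of this graph is
   exactly a copy of C_3^(2k), and the graph has (2k choose k) e(H) ordered edges, close to half of
   all ordered pairs of k-sets. By stability of triangle-free graphs, some family X of k-sets makes it
   the complete bipartite graph between X and its complement up to few cut errors.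

   Fix a (k-1)-set W and put s into V1 iff W + s \<in> X. Enumerate a 2k-set S disjoint from W as
   s_0, ..., s_(2k-1) and pass from {s_0, ..., s_(k-1)} to {s_k, ..., s_(2k-1)} by exchanging s_i for
   s_(k+i). Unless the exchange changes membership in X differently on top of the current (k-1)-set
   than on top of W (an inconsistent swap), step i flips membership in X iff exactly one of s_i,
   s_(k+i) lies in V1. Then S \<in> E iff |S \<inter> V1| is odd, i.e. S is correct. Every inconsistent
   swap produces a cut error, so averaging over W yields a W with few of them. *)
theory Submission
  imports Defs "HOL-Analysis.Convex" "HOL-Library.Ramsey"
begin

lemma ex_ge_average:
  fixes f :: "'a \<Rightarrow> nat"
  assumes "finite A" "A \<noteq> {}"
  shows "\<exists>a\<in>A. sum f A \<le> card A * f a"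
proof (rule ccontr)
  assume "\<not> ?thesis"
  then have "(\<Sum>a\<in>A. card A * f a) < (\<Sum>a\<in>A. sum f A)"
    using assms by (intro sum_strict_mono) (auto simp: not_le)
  then show False by (simp add: sum_distrib_left)
qed

lemma ex_le_average:
  fixes f :: "'a \<Rightarrow> nat"
  assumes "finite A" "A \<noteq> {}"
  shows "\<exists>a\<in>A. card A * f a \<le> sum f A"
proof (rule ccontr)
  assume "\<not> ?thesis"
  then have "(\<Sum>a\<in>A. sum f A) < (\<Sum>a\<in>A. card A * f a)"
    using assms by (intro sum_strict_mono) (auto simp: not_le)
  then show False by (simp add: sum_distrib_left)
qed

definition cut_errors :: "'a set \<Rightarrow> ('a \<Rightarrow> 'a \<Rightarrow> bool) \<Rightarrow> 'a set \<Rightarrow> ('a \<times> 'a) set" where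
  "cut_errors V R X = {(u, v) \<in> V \<times> V. R u v \<noteq> ((u \<in> X) \<noteq> (v \<in> X))}"

lemma handshake_identities:
  fixes R :: "'a \<Rightarrow> 'a \<Rightarrow> bool"
  assumes "finite V" and R_sub: "\<And>u v. R u v \<Longrightarrow> u \<in> V \<and> v \<in> V"
    and R_sym: "\<And>u v. R u v \<Longrightarrow> R v u"
  shows "card {(u, v). R u v} = (\<Sum>u\<in>V. card {v. R u v})"
    and "(\<Sum>(u, v)\<in>{(u, v). R u v}. card {w. R u w} + card {w. R v w}) = 2 * (\<Sum>u\<in>V. card {w. R u w}^2)"
proof -
  define d where "d u = card {v. R u v}" for u
  define Rs where "Rs = {(u, v). R u v}"
  have Rs_Sigma: "Rs = Sigma V (\<lambda>u. {v. R u v})"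
    using R_sub by (auto simp: Rs_def)
  have finite_nbhd: "finite {v. R u v}" for u
    using R_sub \<open>finite V\<close> by (auto intro: finite_subset)
  show "card {(u, v). R u v} = (\<Sum>u\<in>V. card {v. R u v})"
    using \<open>finite V\<close> finite_nbhd by (simp flip: Rs_def add: Rs_Sigma)
  have "bij_betw prod.swap Rs Rs"
    using R_sym by (auto simp: bij_betw_def Rs_def inj_on_def image_def)
  from sum.reindex_bij_betw[OF this, of "\<lambda>(u, v). d u"]
  have "(\<Sum>(u, v)\<in>Rs. d v) = (\<Sum>(u, v)\<in>Rs. d u)"
    by (simp add: case_prod_beta)
  moreover have "(\<Sum>(u, v)\<in>Rs. d u) = (\<Sum>u\<in>V. d u^2)"
    using \<open>finite V\<close> finite_nbhd by (simp add: Rs_Sigma sum.Sigma[symmetric] d_def power2_eq_square)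
  ultimately show "(\<Sum>(u, v)\<in>{(u, v). R u v}. card {w. R u w} + card {w. R v w}) = 2 * (\<Sum>u\<in>V. card {w. R u w}^2)"
    by (simp add: sum.distrib split_def Rs_def d_def)
qed

lemma ex_edge_degree_sum_ge:
  fixes R :: "'a \<Rightarrow> 'a \<Rightarrow> bool"
  assumes "finite V" and R_sub: "\<And>u v. R u v \<Longrightarrow> u \<in> V \<and> v \<in> V"
    and R_sym: "\<And>u v. R u v \<Longrightarrow> R v u" and "R a0 b0"
  shows "\<exists>a b. R a b \<and> 2 * card {(u, v). R u v} \<le> (card {v. R a v} + card {v. R b v}) * card V"
proof -
  define d where "d u = card {v. R u v}" for u
  define Rs where "Rs = {(u, v). R u v}"
  have "finite Rs"
    using \<open>finite V\<close> R_sub by (auto simp: Rs_def intro: finite_subset[of _ "V \<times> V"])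
  moreover have "Rs \<noteq> {}"
    using \<open>R a0 b0\<close> by (auto simp: Rs_def)
  ultimately obtain a b where "R a b" and ab: "(\<Sum>(u, v)\<in>Rs. d u + d v) \<le> card Rs * (d a + d b)"
    using ex_ge_average[of Rs "\<lambda>(u, v). d u + d v"] by (auto simp: Rs_def)
  then have "2 * (\<Sum>u\<in>V. d u^2) \<le> card Rs * (d a + d b)"
    using handshake_identities(2)[where V = V and R = R, OF \<open>finite V\<close> R_sub R_sym] by (simp add: Rs_def d_def)
  then have "real (2 * (\<Sum>u\<in>V. d u^2)) \<le> real (card Rs * (d a + d b))"
    by (simp only: of_nat_le_iff)
  then have sq_le: "2 * (\<Sum>u\<in>V. real (d u)^2) \<le> real (card Rs) * real (d a + d b)"
    by simp
  have "real (card Rs)^2 \<le> (\<Sum>u\<in>V. real (d u)^2) * card V"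
    using sum_squared_le_sum_of_squares[of "\<lambda>u. real (d u)" V]
      handshake_identities(1)[where V = V and R = R, OF \<open>finite V\<close> R_sub R_sym]
    by (simp add: Rs_def d_def)
  also have "\<dots> \<le> real (card Rs) * real (d a + d b) / 2 * card V"
    using sq_le by (intro mult_right_mono) simp_all
  finally have "2 * real (card Rs) * real (card Rs) \<le> real (card Rs) * (real (d a + d b) * card V)"
    by (simp add: power2_eq_square)
  then have "real (2 * card Rs) \<le> real ((d a + d b) * card V)"
    using \<open>finite Rs\<close> \<open>Rs \<noteq> {}\<close> by (simp add: card_gt_0_iff mult.commute)
  then show ?thesis
    using \<open>R a b\<close> unfolding Rs_def d_def of_nat_le_iff by blast
qed

lemma card_cross_pairs_le:
  assumes "finite V" "X \<subseteq> V"
  shows "real (card {(u, v) \<in> V \<times> V. (u \<in> X) \<noteq> (v \<in> X)}) \<le> real (card V)^2 / 2"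
proof -
  have "{(u, v) \<in> V \<times> V. (u \<in> X) \<noteq> (v \<in> X)} = X \<times> (V - X) \<union> (V - X) \<times> X"
    using assms(2) by auto
  moreover have "card (X \<times> (V - X) \<union> (V - X) \<times> X) = 2 * (card X * (card V - card X))"
    using assms by (subst card_Un_disjoint)
      (auto simp: card_cartesian_product card_Diff_subset finite_subset)
  moreover have "card X \<le> card V"
    using assms by (simp add: card_mono)
  ultimately have "real (card {(u, v) \<in> V \<times> V. (u \<in> X) \<noteq> (v \<in> X)})
      = 2 * (real (card X) * (real (card V) - real (card X)))"
    by simp
  also have "\<dots> \<le> real (card V)^2 / 2"
    using zero_le_power2[of "real (card V) - 2 * real (card X)"]
    by (simp add: power2_eq_square algebra_simps)
  finally show ?thesis .
qed

lemma card_cut_errors_eq: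
  assumes "finite V" and R_sub: "\<And>u v. R u v \<Longrightarrow> u \<in> V \<and> v \<in> V"
  shows "card (cut_errors V R X) + card {(u, v). R u v}
    = card {(u, v) \<in> V \<times> V. (u \<in> X) \<noteq> (v \<in> X)} + 2 * card {(u, v). R u v \<and> (u \<in> X) = (v \<in> X)}"
proof -
  define Cross where "Cross = {(u, v) \<in> V \<times> V. (u \<in> X) \<noteq> (v \<in> X)}"
  define Rs where "Rs = {(u, v). R u v}"
  define Same where "Same = {(u, v). R u v \<and> (u \<in> X) = (v \<in> X)}"
  have "finite Cross" "finite Same"
    using \<open>finite V\<close> R_sub by (auto simp: Cross_def Same_def intro: finite_subset[of _ "V \<times> V"])
  have "cut_errors V R X = Same \<union> (Cross - Rs)" "Same \<inter> (Cross - Rs) = {}"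
    using R_sub by (auto simp: cut_errors_def Same_def Cross_def Rs_def)
  then have "card (cut_errors V R X) = card Same + card (Cross - Rs)"
    using \<open>finite Cross\<close> \<open>finite Same\<close> by (simp add: card_Un_disjoint)
  moreover have "Rs = (Cross \<inter> Rs) \<union> Same" "(Cross \<inter> Rs) \<inter> Same = {}"
    using R_sub by (auto simp: Same_def Cross_def Rs_def)
  then have "card Rs = card (Cross \<inter> Rs) + card Same"
    using \<open>finite Cross\<close> \<open>finite Same\<close> by (metis card_Un_disjoint finite_Int)
  moreover have "card Cross = card (Cross \<inter> Rs) + card (Cross - Rs)"
    using \<open>finite Cross\<close> by (rule card_Int_Diff)
  ultimately show ?thesis
    unfolding Cross_def Rs_def Same_def by linarith
qed

lemma card_outside_edge_neighbourhoods:
  assumes "finite V" and R_sub: "\<And>u v. R u v \<Longrightarrow> u \<in> V \<and> v \<in> V"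
    and R_sym: "\<And>u v. R u v \<Longrightarrow> R v u"
    and triangle_free: "\<And>a b c. R a b \<Longrightarrow> R b c \<Longrightarrow> R c a \<Longrightarrow> False"
    and "R a b"
  shows "real (card (V - ({v. R a v} \<union> {v. R b v})))
    = real (card V) - real (card {v. R a v}) - real (card {v. R b v})"
proof -
  have "{v. R a v} \<inter> {v. R b v} = {}"
    using triangle_free \<open>R a b\<close> R_sym by blast
  moreover have sub: "{v. R a v} \<union> {v. R b v} \<subseteq> V"
    using R_sub by blast
  ultimately have "card ({v. R a v} \<union> {v. R b v}) = card {v. R a v} + card {v. R b v}"
    using \<open>finite V\<close> by (intro card_Un_disjoint) (auto intro: finite_subset)
  moreover have "card ({v. R a v} \<union> {v. R b v}) \<le> card V"
    using \<open>finite V\<close> sub by (rule card_mono)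
  moreover have "card (V - ({v. R a v} \<union> {v. R b v})) = card V - card ({v. R a v} \<union> {v. R b v})"
    using sub \<open>finite V\<close> by (metis card_Diff_subset finite_subset)
  ultimately show ?thesis
    by simp
qed

lemma card_same_side_edges_le:
  assumes "finite V" and R_sub: "\<And>u v. R u v \<Longrightarrow> u \<in> V \<and> v \<in> V"
    and R_sym: "\<And>u v. R u v \<Longrightarrow> R v u"
    and triangle_free: "\<And>a b c. R a b \<Longrightarrow> R b c \<Longrightarrow> R c a \<Longrightarrow> False"
    and "R a b"
  shows "real (card {(u, v). R u v \<and> R b u = R b v})
    \<le> 2 * (real (card V) - real (card {v. R a v}) - real (card {v. R b v})) * real (card V)"
proof -
  define Rest where "Rest = V - ({v. R a v} \<union> {v. R b v})"
  have "finite Rest"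
    using \<open>finite V\<close> by (simp add: Rest_def)
  have "(u, v) \<in> Rest \<times> V \<union> V \<times> Rest" if "R u v" "R b u = R b v" for u v
  proof -
    have "\<not> (R b u \<and> R b v)" "\<not> (R a u \<and> R a v)"
      using triangle_free[of b u v] triangle_free[of a u v] R_sym \<open>R u v\<close> by blast+
    then show ?thesis
      using that R_sub[OF \<open>R u v\<close>] by (auto simp: Rest_def)
  qed
  then have "{(u, v). R u v \<and> R b u = R b v} \<subseteq> Rest \<times> V \<union> V \<times> Rest"
    by blast
  then have "card {(u, v). R u v \<and> R b u = R b v} \<le> card (Rest \<times> V) + card (V \<times> Rest)"
    using \<open>finite V\<close> \<open>finite Rest\<close> by (meson card_Un_le card_mono finite_SigmaI finite_UnI order_trans)
  then have "card {(u, v). R u v \<and> R b u = R b v} \<le> 2 * card Rest * card V"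
    by (simp add: card_cartesian_product algebra_simps)
  then have "real (card {(u, v). R u v \<and> R b u = R b v}) \<le> real (2 * card Rest * card V)"
    by (simp only: of_nat_le_iff)
  then show ?thesis
    using card_outside_edge_neighbourhoods[of V R, OF \<open>finite V\<close> R_sub R_sym triangle_free \<open>R a b\<close>]
    by (simp add: Rest_def)
qed

(* X is the neighbourhood of b for an edge ab maximising d(a) + d(b). The neighbourhoods of a and b
   are disjoint independent sets, so every edge within one side of the cut meets the rest of V. *)
lemma triangle_free_cut_errors_le:
  fixes R :: "'a \<Rightarrow> 'a \<Rightarrow> bool"
  assumes "finite V" and R_sub: "\<And>u v. R u v \<Longrightarrow> u \<in> V \<and> v \<in> V"
    and R_sym: "\<And>u v. R u v \<Longrightarrow> R v u"
    and triangle_free: "\<And>a b c. R a b \<Longrightarrow> R b c \<Longrightarrow> R c a \<Longrightarrow> False"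
  shows "\<exists>X\<subseteq>V. real (card (cut_errors V R X)) \<le> 9 * (real (card V)^2 / 2 - real (card {(u, v). R u v}))"
proof (cases "\<exists>a b. R a b")
  case False
  then show ?thesis
    by (intro exI[of _ "{}"]) (simp add: cut_errors_def)
next
  case True
  then obtain a0 b0 where "R a0 b0"
    by blast
  then obtain a b where "R a b" and degrees:
    "2 * card {(u, v). R u v} \<le> (card {v. R a v} + card {v. R b v}) * card V"
    using ex_edge_degree_sum_ge[where V = V and R = R, OF \<open>finite V\<close> R_sub R_sym] by blast
  define X where "X = {v. R b v}"
  have "X \<subseteq> V"
    using R_sub by (auto simp: X_def)
  have "real (card (cut_errors V R X)) + real (card {(u, v). R u v})
      = real (card {(u, v) \<in> V \<times> V. (u \<in> X) \<noteq> (v \<in> X)}) + 2 * real (card {(u, v). R u v \<and> R b u = R b v})"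
    using card_cut_errors_eq[where V = V and R = R and X = X, OF \<open>finite V\<close> R_sub] unfolding X_def by (simp flip: of_nat_add)
  also have "\<dots> \<le> real (card V)^2 / 2
      + 4 * (real (card V) - real (card {v. R a v}) - real (card {v. R b v})) * real (card V)"
  proof -
    have "real (card {(u, v). R u v \<and> R b u = R b v})
      \<le> 2 * (real (card V) - real (card {v. R a v}) - real (card {v. R b v})) * real (card V)"
      using \<open>finite V\<close> R_sub R_sym triangle_free \<open>R a b\<close> by (rule card_same_side_edges_le)
    then show ?thesis
      using card_cross_pairs_le[OF \<open>finite V\<close> \<open>X \<subseteq> V\<close>] by linarith
  qed
  also have "\<dots> \<le> 9 * (real (card V)^2 / 2) - 8 * real (card {(u, v). R u v})"
  proof -
    have "2 * real (card {(u, v). R u v}) \<le> (real (card {v. R a v}) + real (card {v. R b v})) * real (card V)"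
      using of_nat_mono[OF degrees, where 'a = real] by simp
    then show ?thesis
      by (simp add: algebra_simps power2_eq_square)
  qed
  finally have "real (card (cut_errors V R X)) \<le> 9 * (real (card V)^2 / 2 - real (card {(u, v). R u v}))"
    unfolding right_diff_distrib by linarith
  then show ?thesis
    using \<open>X \<subseteq> V\<close> by blast
qed

lemma card_disjoint_splits:
  assumes "finite F" and F: "\<And>S. S \<in> F \<Longrightarrow> finite S \<and> card S = m + l"
  shows "card {(C, D). card C = m \<and> card D = l \<and> C \<inter> D = {} \<and> C \<union> D \<in> F} = card F * (m + l choose m)"
proof -
  define Splits where "Splits = {(C, D). card C = m \<and> card D = l \<and> C \<inter> D = {} \<and> C \<union> D \<in> F}"
  define Marked where "Marked = Sigma F (\<lambda>S. {C. C \<subseteq> S \<and> card C = m})"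
  have "bij_betw (\<lambda>(C, D). (C \<union> D, C)) Splits Marked"
  proof (rule bij_betw_byWitness[where f' = "\<lambda>(S, C). (C, S - C)"])
    show "\<forall>p\<in>Splits. (\<lambda>(S, C). (C, S - C)) ((\<lambda>(C, D). (C \<union> D, C)) p) = p"
      by (auto simp: Splits_def)
    show "\<forall>q\<in>Marked. (\<lambda>(C, D). (C \<union> D, C)) ((\<lambda>(S, C). (C, S - C)) q) = q"
      by (auto simp: Marked_def)
    show "(\<lambda>(C, D). (C \<union> D, C)) ` Splits \<subseteq> Marked"
      by (auto simp: Splits_def Marked_def)
    show "(\<lambda>(S, C). (C, S - C)) ` Marked \<subseteq> Splits"
    proof clarify
      fix S C assume "(S, C) \<in> Marked"
      then have "S \<in> F" "C \<subseteq> S" "card C = m"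
        by (auto simp: Marked_def)
      moreover from this have "card (S - C) = l"
        using F by (simp add: card_Diff_subset finite_subset)
      moreover have "C \<union> (S - C) = S"
        using \<open>C \<subseteq> S\<close> by blast
      ultimately show "(C, S - C) \<in> Splits"
        by (simp add: Splits_def)
    qed
  qed
  then have "card Splits = card Marked"
    by (rule bij_betw_same_card)
  also have "\<dots> = (\<Sum>S\<in>F. card {C. C \<subseteq> S \<and> card C = m})"
    unfolding Marked_def using \<open>finite F\<close> F
    by (intro card_SigmaI) (auto intro: finite_subset[of _ "Pow _"])
  also have "\<dots> = card F * (m + l choose m)"
    using F by (simp add: n_subsets)
  finally show ?thesis
    by (simp add: Splits_def)
qed

lemma card_nsets_containing_le:
  assumes "finite V" "1 \<le> m"
  shows "card {S \<in> nsets V m. x \<in> S} \<le> card V ^ (m - 1)"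
proof -
  have "card {S \<in> nsets V m. x \<in> S} \<le> card (nsets V (m - 1))"
  proof (rule card_inj_on_le[where f = "\<lambda>S. S - {x}"])
    show "inj_on (\<lambda>S. S - {x}) {S \<in> nsets V m. x \<in> S}"
      by (rule inj_on_inverseI[where g = "insert x"]) auto
    show "(\<lambda>S. S - {x}) ` {S \<in> nsets V m. x \<in> S} \<subseteq> nsets V (m - 1)"
      by (auto simp: nsets_def)
    show "finite (nsets V (m - 1))"
      using \<open>finite V\<close> by (rule finite_imp_finite_nsets)
  qed
  also have "\<dots> \<le> card V ^ (m - 1)"
    by (cases "m - 1 \<le> card V") (simp_all add: binomial_le_pow binomial_eq_0)
  finally show ?thesis .
qed

lemma card_nsets_meeting_le:
  assumes "finite V" "1 \<le> m" "finite W"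
  shows "card {S \<in> nsets V m. S \<inter> W \<noteq> {}} \<le> card W * card V ^ (m - 1)"
proof -
  have "{S \<in> nsets V m. S \<inter> W \<noteq> {}} = (\<Union>x\<in>W. {S \<in> nsets V m. x \<in> S})"
    by auto
  then have "card {S \<in> nsets V m. S \<inter> W \<noteq> {}} \<le> (\<Sum>x\<in>W. card {S \<in> nsets V m. x \<in> S})"
    using card_UN_le[OF \<open>finite W\<close>] by simp
  also have "\<dots> \<le> (\<Sum>x\<in>W. card V ^ (m - 1))"
    using assms(1,2) by (intro sum_mono card_nsets_containing_le)
  finally show ?thesis
    by simp
qed

lemma card_meeting_pairs_le:
  assumes "finite V" "1 \<le> k"
  shows "card (\<Union>x\<in>V. {S \<in> nsets V k. x \<in> S} \<times> {S \<in> nsets V k. x \<in> S}) \<le> card V ^ (2*k - 1)"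
proof -
  have "card (\<Union>x\<in>V. {S \<in> nsets V k. x \<in> S} \<times> {S \<in> nsets V k. x \<in> S})
      \<le> (\<Sum>x\<in>V. card {S \<in> nsets V k. x \<in> S} * card {S \<in> nsets V k. x \<in> S})"
    using card_UN_le[OF \<open>finite V\<close>, of "\<lambda>x. {S \<in> nsets V k. x \<in> S} \<times> {S \<in> nsets V k. x \<in> S}"]
    by (simp add: card_cartesian_product)
  also have "\<dots> \<le> (\<Sum>x\<in>V. card V ^ (k - 1) * card V ^ (k - 1))"
    using card_nsets_containing_le[OF assms] by (intro sum_mono mult_mono) simp_all
  also have "\<dots> = card V ^ Suc ((k - 1) + (k - 1))"
    by (simp add: power_add)
  also have "Suc ((k - 1) + (k - 1)) = 2*k - 1"
    using \<open>1 \<le> k\<close> by simp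
  finally show ?thesis .
qed

lemma card_nsets_squared_le:
  assumes "finite V" "1 \<le> k"
  shows "card (nsets V k)^2 \<le> (card V choose (2*k)) * (2*k choose k) + card V ^ (2*k - 1)"
proof -
  define K where "K = nsets V k"
  define Disjoint where "Disjoint = {(C, D). card C = k \<and> card D = k \<and> C \<inter> D = {} \<and> C \<union> D \<in> nsets V (k + k)}"
  define Meeting where "Meeting = (\<Union>x\<in>V. {S \<in> K. x \<in> S} \<times> {S \<in> K. x \<in> S})"
  have "(C, D) \<in> Disjoint \<union> Meeting" if "C \<in> K" "D \<in> K" for C D
  proof (cases "C \<inter> D = {}")
    case True
    then have "card (C \<union> D) = k + k"
      using that by (simp add: K_def nsets_def card_Un_disjoint)
    then show ?thesis
      using True that unfolding Disjoint_def K_def nsets_def by auto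
  next
    case False
    then obtain x where "x \<in> C" "x \<in> D"
      by blast
    moreover have "x \<in> V"
      using \<open>x \<in> C\<close> \<open>C \<in> K\<close> unfolding K_def nsets_def by blast
    ultimately show ?thesis
      using that unfolding Meeting_def by blast
  qed
  then have "K \<times> K \<subseteq> Disjoint \<union> Meeting"
    by auto
  moreover have "finite (Disjoint \<union> Meeting)"
    using \<open>finite V\<close> by (auto simp: K_def Disjoint_def Meeting_def nsets_def intro: finite_subset[of _ "Pow V \<times> Pow V"])
  ultimately have "card (K \<times> K) \<le> card (Disjoint \<union> Meeting)"
    by (rule card_mono[rotated])
  also have "\<dots> \<le> card Disjoint + card Meeting"
    by (rule card_Un_le)
  finally have "card (K \<times> K) \<le> card Disjoint + card Meeting" .
  moreover have "card Disjoint = card (nsets V (k + k)) * (k + k choose k)"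
    unfolding Disjoint_def using \<open>finite V\<close>
    by (intro card_disjoint_splits) (auto simp: nsets_def finite_imp_finite_nsets)
  ultimately show ?thesis
    using card_meeting_pairs_le[OF assms] by (simp add: K_def Meeting_def power2_eq_square card_cartesian_product mult_2)
qed

definition splits_edge :: "'a set set \<Rightarrow> 'a set \<Rightarrow> 'a set \<Rightarrow> bool" where
  "splits_edge E C D \<longleftrightarrow> C \<inter> D = {} \<and> C \<union> D \<in> E"

lemma card_splits_edge_pairs:
  assumes "uniform_hypergraph (2*k) V E"
  shows "card {(C, D). C \<in> nsets V k \<and> D \<in> nsets V k \<and> splits_edge E C D} = card E * (2*k choose k)"
proof -
  have E: "S \<subseteq> V \<and> finite S \<and> card S = k + k" if "S \<in> E" for S
    using assms that by (auto simp: uniform_hypergraph_def intro: finite_subset)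
  have "finite E"
    using assms by (auto simp: uniform_hypergraph_def intro: finite_subset[of E "Pow V"])
  have "{(C, D). C \<in> nsets V k \<and> D \<in> nsets V k \<and> splits_edge E C D}
      = {(C, D). card C = k \<and> card D = k \<and> C \<inter> D = {} \<and> C \<union> D \<in> E}"
    using E by (fastforce simp: nsets_def splits_edge_def)
  then show ?thesis
    using card_disjoint_splits[of E k k] \<open>finite E\<close> E by (simp add: mult_2)
qed

lemma splits_edge_triangle_free:
  assumes "\<not> contains_C3 k V E" "C \<in> nsets V k" "D \<in> nsets V k" "F \<in> nsets V k"
    "splits_edge E C D" "splits_edge E D F" "splits_edge E F C"
  shows False
  using assms unfolding contains_C3_def splits_edge_def nsets_def by blast

lemma splits_edge_cut_errors_le:
  assumes "finite V" "1 \<le> k" "uniform_hypergraph (2*k) V E" "\<not> contains_C3 k V E"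
  shows "\<exists>X\<subseteq>nsets V k. real (card (cut_errors (nsets V k) (splits_edge E) X))
    \<le> 9 * (real (card V) ^ (2*k - 1) / 2 + real (2*k choose k) * (real (card V choose (2*k)) / 2 - real (card E)))"
proof -
  define R where "R C D \<longleftrightarrow> C \<in> nsets V k \<and> D \<in> nsets V k \<and> splits_edge E C D" for C D
  have "\<exists>X\<subseteq>nsets V k. real (card (cut_errors (nsets V k) R X))
      \<le> 9 * (real (card (nsets V k))^2 / 2 - real (card {(C, D). R C D}))"
  proof (rule triangle_free_cut_errors_le)
    show "finite (nsets V k)"
      using \<open>finite V\<close> by (rule finite_imp_finite_nsets)
    show "R C D \<Longrightarrow> R D C" for C D
      by (auto simp: R_def splits_edge_def Int_commute Un_commute)
    show "R C D \<Longrightarrow> R D F \<Longrightarrow> R F C \<Longrightarrow> False" for C D F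
      using splits_edge_triangle_free[OF assms(4)] by (auto simp: R_def)
  qed (simp add: R_def)
  then obtain X where "X \<subseteq> nsets V k" and X: "real (card (cut_errors (nsets V k) R X))
      \<le> 9 * (real (card (nsets V k))^2 / 2 - real (card {(C, D). R C D}))"
    by blast
  have "cut_errors (nsets V k) R X = cut_errors (nsets V k) (splits_edge E) X"
    by (auto simp: cut_errors_def R_def)
  moreover have "card {(C, D). R C D} = card E * (2*k choose k)"
    using card_splits_edge_pairs[OF assms(3)] by (simp add: R_def)
  moreover have "real (card (nsets V k))^2 \<le> real (card V choose (2*k)) * real (2*k choose k) + real (card V) ^ (2*k - 1)"
    using card_nsets_squared_le[OF assms(1,2)] by (metis of_nat_add of_nat_le_iff of_nat_mult of_nat_power)
  ultimately show ?thesis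
    using \<open>X \<subseteq> nsets V k\<close> X by (intro exI[of _ X]) (auto simp: algebra_simps)
qed

definition inconsistent_swaps :: "'a set \<Rightarrow> nat \<Rightarrow> 'a set set \<Rightarrow> 'a set \<Rightarrow> ('a set \<times> 'a \<times> 'a) set" where
  "inconsistent_swaps V j X W = {(P, a, b). P \<in> nsets V j \<and> P \<inter> W = {} \<and>
     a \<in> V - P - W \<and> b \<in> V - P - W \<and> a \<noteq> b \<and>
     ((insert a P \<in> X) = (insert b P \<in> X)) \<noteq> ((insert a W \<in> X) = (insert b W \<in> X))}"

lemma finite_inconsistent_swaps:
  assumes "finite V"
  shows "finite (inconsistent_swaps V j X W)"
proof (rule finite_subset)
  show "inconsistent_swaps V j X W \<subseteq> nsets V j \<times> V \<times> V"
    by (auto simp: inconsistent_swaps_def)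
  show "finite (nsets V j \<times> V \<times> V)"
    using assms by (simp add: finite_imp_finite_nsets)
qed

lemma insert_in_nsets:
  assumes "P \<in> nsets V j" "a \<in> V - P"
  shows "insert a P \<in> nsets V (Suc j)"
  using assms by (auto simp: nsets_def)

lemma inconsistent_swap_cut_error:
  assumes "W \<in> nsets V j" and swap: "(P, a, b) \<in> inconsistent_swaps V j X W"
  shows "(insert a P, insert b W) \<in> cut_errors (nsets V (Suc j)) (splits_edge E) X
    \<or> (insert b P, insert a W) \<in> cut_errors (nsets V (Suc j)) (splits_edge E) X"
proof -
  have "insert a P \<in> nsets V (Suc j)" "insert b P \<in> nsets V (Suc j)"
    "insert a W \<in> nsets V (Suc j)" "insert b W \<in> nsets V (Suc j)"
    using assms by (auto simp: inconsistent_swaps_def intro!: insert_in_nsets)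
  moreover have "insert a P \<inter> insert b W = {}" "insert b P \<inter> insert a W = {}"
    using swap by (auto simp: inconsistent_swaps_def)
  moreover have "insert a P \<union> insert b W = insert b P \<union> insert a W"
    by auto
  ultimately show ?thesis
    using swap unfolding cut_errors_def splits_edge_def inconsistent_swaps_def by auto
qed

(* Each inconsistent swap (W, P, a, b) is recovered from one of the cut errors (P + a, W + b) and
   (P + b, W + a) together with the choice of a and b. *)
lemma inconsistent_swaps_recovered:
  fixes V :: "'a set" and j :: nat and E X :: "'a set set"
  defines "Marked \<equiv> Sigma (cut_errors (nsets V (Suc j)) (splits_edge E) X) (\<lambda>(C, D). C \<times> D)"
  shows "Sigma (nsets V j) (inconsistent_swaps V j X)
    \<subseteq> (\<lambda>((C, D), a, b). (D - {b}, C - {a}, a, b)) ` Marked \<union> (\<lambda>((C, D), b, a). (D - {a}, C - {b}, a, b)) ` Marked"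
proof
  fix t assume "t \<in> Sigma (nsets V j) (inconsistent_swaps V j X)"
  then obtain W P a b where t: "t = (W, P, a, b)"
    and W: "W \<in> nsets V j" and swap: "(P, a, b) \<in> inconsistent_swaps V j X W"
    by auto
  from swap have "a \<notin> P" "b \<notin> P" "a \<notin> W" "b \<notin> W"
    by (auto simp: inconsistent_swaps_def)
  then have recover: "t = (\<lambda>((C, D), a, b). (D - {b}, C - {a}, a, b)) ((insert a P, insert b W), a, b)"
    and recover': "t = (\<lambda>((C, D), b, a). (D - {a}, C - {b}, a, b)) ((insert b P, insert a W), b, a)"
    by (simp_all add: t)
  from inconsistent_swap_cut_error[OF W swap]
  consider "((insert a P, insert b W), a, b) \<in> Marked" | "((insert b P, insert a W), b, a) \<in> Marked"
    by (auto simp: Marked_def)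
  then show "t \<in> (\<lambda>((C, D), a, b). (D - {b}, C - {a}, a, b)) ` Marked
      \<union> (\<lambda>((C, D), b, a). (D - {a}, C - {b}, a, b)) ` Marked"
  proof cases
    case 1
    show ?thesis
      using rev_image_eqI[where f = "\<lambda>((C, D), a, b). (D - {b}, C - {a}, a, b)", OF 1 recover] by (rule UnI1)
  next
    case 2
    show ?thesis
      using rev_image_eqI[where f = "\<lambda>((C, D), b, a). (D - {a}, C - {b}, a, b)", OF 2 recover'] by (rule UnI2)
  qed
qed

lemma sum_card_inconsistent_swaps_le:
  fixes V :: "'a set"
  assumes "finite V"
  shows "(\<Sum>W\<in>nsets V j. card (inconsistent_swaps V j X W))
    \<le> 2 * (Suc j)^2 * card (cut_errors (nsets V (Suc j)) (splits_edge E) X)"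
proof -
  define M where "M = cut_errors (nsets V (Suc j)) (splits_edge E) X"
  define Marked where "Marked = Sigma M (\<lambda>(C, D). C \<times> D)"
  have "M \<subseteq> nsets V (Suc j) \<times> nsets V (Suc j)"
    by (auto simp: M_def cut_errors_def)
  then have "finite M"
    using \<open>finite V\<close> by (meson finite_SigmaI finite_imp_finite_nsets finite_subset)
  have "finite Marked"
    unfolding Marked_def using \<open>finite M\<close> \<open>M \<subseteq> _\<close>
    by (intro finite_SigmaI) (auto simp: nsets_def)
  have "card Marked = (\<Sum>p\<in>M. card (fst p \<times> snd p))"
    unfolding Marked_def using \<open>finite M\<close> \<open>M \<subseteq> _\<close>
    by (subst card_SigmaI) (auto simp: nsets_def split_def)
  also have "\<dots> = (\<Sum>p\<in>M. (Suc j)^2)"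
    using \<open>M \<subseteq> _\<close> by (intro sum.cong) (auto simp: nsets_def card_cartesian_product power2_eq_square)
  finally have card_Marked: "card Marked = card M * (Suc j)^2"
    by simp
  have "(\<Sum>W\<in>nsets V j. card (inconsistent_swaps V j X W)) = card (Sigma (nsets V j) (inconsistent_swaps V j X))"
    using \<open>finite V\<close> by (simp add: finite_imp_finite_nsets finite_inconsistent_swaps)
  also have "\<dots> \<le> card ((\<lambda>((C, D), a, b). (D - {b}, C - {a}, a, b)) ` Marked
      \<union> (\<lambda>((C, D), b, a). (D - {a}, C - {b}, a, b)) ` Marked)"
  proof (rule card_mono)
    show "finite ((\<lambda>((C, D), a, b). (D - {b}, C - {a}, a, b)) ` Marked
        \<union> (\<lambda>((C, D), b, a). (D - {a}, C - {b}, a, b)) ` Marked)"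
      using \<open>finite Marked\<close> by simp
  qed (unfold Marked_def M_def, rule inconsistent_swaps_recovered)
  also have "\<dots> \<le> card Marked + card Marked"
    by (meson add_mono card_Un_le card_image_le \<open>finite Marked\<close> order_trans)
  also have "\<dots> = 2 * (Suc j)^2 * card M"
    using card_Marked by simp
  finally show ?thesis
    by (simp add: M_def)
qed

lemma ex_few_inconsistent_swaps:
  assumes "finite V" "j \<le> card V"
  shows "\<exists>W\<in>nsets V j. card (nsets V j) * card (inconsistent_swaps V j X W)
    \<le> 2 * (Suc j)^2 * card (cut_errors (nsets V (Suc j)) (splits_edge E) X)"
proof -
  have "nsets V j \<noteq> {}"
    using assms by (simp add: nsets_eq_empty_iff)
  then show ?thesis
    using ex_le_average[of "nsets V j" "\<lambda>W. card (inconsistent_swaps V j X W)"]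
      sum_card_inconsistent_swaps_le[OF assms(1), of j X E] \<open>finite V\<close>
    by (meson finite_imp_finite_nsets order_trans)
qed

lemma chain_parity:
  fixes f :: "nat \<Rightarrow> bool"
  assumes "\<And>i. i < m \<Longrightarrow> (f i \<longleftrightarrow> f (Suc i)) \<longleftrightarrow> (p i \<longleftrightarrow> q i)"
  shows "(f 0 \<noteq> f m) \<longleftrightarrow> odd (\<Sum>i<m. of_bool (p i) + of_bool (q i) :: nat)"
  using assms
proof (induction m)
  case 0
  then show ?case
    by simp
next
  case (Suc m)
  then have "(f 0 \<noteq> f m) \<longleftrightarrow> odd (\<Sum>i<m. of_bool (p i) + of_bool (q i) :: nat)"
    and "(f m \<longleftrightarrow> f (Suc m)) \<longleftrightarrow> (p m \<longleftrightarrow> q m)"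
    by simp_all
  then show ?case
    by (cases "p m"; cases "q m") auto
qed

definition chain_block :: "nat \<Rightarrow> nat \<Rightarrow> nat set" where
  "chain_block k i = {i..<k} \<union> {k..<k + i}"

lemma chain_block_0 [simp]: "chain_block k 0 = {..<k}"
  by (auto simp: chain_block_def)

lemma chain_block_self [simp]: "chain_block k k = {k..<2*k}"
  by (auto simp: chain_block_def)

lemma finite_chain_block [simp]: "finite (chain_block k i)"
  by (simp add: chain_block_def)

lemma chain_block_subset: "i \<le> k \<Longrightarrow> chain_block k i \<subseteq> {..<2*k}"
  by (auto simp: chain_block_def)

lemma card_chain_block [simp]: "i \<le> k \<Longrightarrow> card (chain_block k i) = k"
  by (simp add: chain_block_def card_Un_disjoint ivl_disj_int)

lemma card_chain_block_Diff:
  assumes "i < k"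
  shows "card (chain_block k i - {i}) = k - 1"
proof -
  have "i \<in> chain_block k i" "finite (chain_block k i)"
    using assms by (auto simp: chain_block_def)
  then show ?thesis
    using assms by (simp add: card_Diff_singleton)
qed

lemma insert_chain_block: "i < k \<Longrightarrow> insert i (chain_block k i - {i}) = chain_block k i"
  by (auto simp: chain_block_def)

lemma chain_block_Suc: "i < k \<Longrightarrow> chain_block k (Suc i) = insert (k + i) (chain_block k i - {i})"
  by (auto simp: chain_block_def)

lemma not_in_chain_block: "k + i \<notin> chain_block k i"
  by (simp add: chain_block_def)

lemma good_set_iff_odd:
  assumes "S \<subseteq> V" "finite S" "even (card S)"
  shows "good_set V1 (V - V1) S \<longleftrightarrow> odd (card (S \<inter> V1))"
proof -
  have "S \<inter> (V - V1) = S - S \<inter> V1"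
    using \<open>S \<subseteq> V\<close> by blast
  then have "card (S \<inter> (V - V1)) = card S - card (S \<inter> V1)"
    using \<open>finite S\<close> by (simp add: card_Diff_subset)
  moreover have "card (S \<inter> V1) \<le> card S"
    using \<open>finite S\<close> by (simp add: card_mono)
  ultimately show ?thesis
    using \<open>even (card S)\<close> by (auto simp: good_set_def)
qed

lemma union_halves:
  fixes h :: "nat \<Rightarrow> 'a"
  assumes "bij_betw h {..<2*k} S"
  shows "h ` {..<k} \<union> h ` {k..<2*k} = S"
proof -
  have "{..<k} \<union> {k..<2*k} = {..<2*k}"
    by auto
  then show ?thesis
    using assms by (simp add: bij_betw_def flip: image_Un)
qed

lemma splits_edge_halves:
  fixes h :: "nat \<Rightarrow> 'a"
  assumes "bij_betw h {..<2*k} S"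
  shows "splits_edge E (h ` {..<k}) (h ` {k..<2*k}) \<longleftrightarrow> S \<in> E"
proof -
  have "h ` {..<k} \<inter> h ` {k..<2*k} = h ` ({..<k} \<inter> {k..<2*k})"
    using assms by (intro inj_on_image_Int[symmetric]) (auto simp: bij_betw_def)
  then have "h ` {..<k} \<inter> h ` {k..<2*k} = {}"
    by auto
  then show ?thesis
    using union_halves[OF assms] by (simp add: splits_edge_def)
qed

lemma correct_set_if_chain_parity:
  fixes h :: "nat \<Rightarrow> 'a"
  assumes h: "bij_betw h {..<2*k} S" and "S \<subseteq> V"
    and edge: "S \<in> E \<longleftrightarrow> (h ` {..<k} \<in> X) \<noteq> (h ` {k..<2*k} \<in> X)"
    and steps: "\<And>i. i < k \<Longrightarrow>
      (h ` chain_block k i \<in> X \<longleftrightarrow> h ` chain_block k (Suc i) \<in> X) \<longleftrightarrow> (g (h i) \<longleftrightarrow> g (h (k + i)))"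
  shows "correct_set E {s \<in> V. g s} (V - {s \<in> V. g s}) S"
proof -
  have "finite S" "card S = 2*k"
    using h by (auto simp: bij_betw_def card_image finite_imageI simp flip: bij_betw_same_card)
  have split: "(\<Sum>j<k + m. f j) = (\<Sum>j<k. f j) + (\<Sum>i<m. f (k + i))" for m and f :: "nat \<Rightarrow> nat"
    by (induction m) auto
  have "S \<in> E \<longleftrightarrow> odd (\<Sum>i<k. of_bool (g (h i)) + of_bool (g (h (k + i))) :: nat)"
    using chain_parity[where f = "\<lambda>i. h ` chain_block k i \<in> X" and m = k, OF steps] edge by simp
  also have "(\<Sum>i<k. of_bool (g (h i)) + of_bool (g (h (k + i))) :: nat) = (\<Sum>j<2*k. of_bool (g (h j)))"
    by (simp add: sum.distrib split mult_2)
  also have "\<dots> = (\<Sum>s\<in>S. of_bool (g s))"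
    by (rule sum.reindex_bij_betw[OF h])
  also have "\<dots> = card (S \<inter> {s. g s})"
    using \<open>finite S\<close> by simp
  also have "S \<inter> {s. g s} = S \<inter> {s \<in> V. g s}"
    using \<open>S \<subseteq> V\<close> by blast
  finally show ?thesis
    using good_set_iff_odd[OF \<open>S \<subseteq> V\<close> \<open>finite S\<close>] \<open>card S = 2*k\<close> by (auto simp: correct_set_def)
qed

lemma chain_step_if_consistent:
  fixes h :: "nat \<Rightarrow> 'a"
  assumes h: "bij_betw h {..<2*k} S" and "S \<subseteq> V" "S \<inter> W = {}" "i < k"
    and consistent: "(h ` (chain_block k i - {i}), h i, h (k + i)) \<notin> inconsistent_swaps V (k - 1) X W"
  shows "(h ` chain_block k i \<in> X \<longleftrightarrow> h ` chain_block k (Suc i) \<in> X)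
    \<longleftrightarrow> (insert (h i) W \<in> X \<longleftrightarrow> insert (h (k + i)) W \<in> X)"
proof -
  define P where "P = h ` (chain_block k i - {i})"
  have inj: "inj_on h {..<2*k}"
    using h by (simp add: bij_betw_def)
  have block: "chain_block k i - {i} \<subseteq> {..<2*k}" "i \<notin> chain_block k i - {i}"
    "k + i \<notin> chain_block k i - {i}"
    using \<open>i < k\<close> chain_block_subset[of i k] not_in_chain_block[of k i] by auto
  have "card P = k - 1"
    unfolding P_def using inj_on_subset[OF inj block(1)] \<open>i < k\<close>
    by (simp add: card_image card_chain_block_Diff)
  moreover have "P \<subseteq> S"
    using h block(1) unfolding P_def bij_betw_def by blast
  moreover have "finite P"
    unfolding P_def by (simp add: chain_block_def)
  ultimately have "P \<in> nsets V (k - 1)" "P \<inter> W = {}"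
    using \<open>S \<subseteq> V\<close> \<open>S \<inter> W = {}\<close> by (auto simp: nsets_def)
  have "i < 2*k" "k + i < 2*k"
    using \<open>i < k\<close> by simp_all
  have "h i \<noteq> h (k + i)"
    using inj_onD[OF inj] \<open>i < 2*k\<close> \<open>k + i < 2*k\<close> \<open>i < k\<close> by fastforce
  have "h i \<notin> P" "h (k + i) \<notin> P"
    unfolding P_def using inj_on_image_mem_iff[OF inj _ block(1)] block(2,3) \<open>i < 2*k\<close> \<open>k + i < 2*k\<close>
    by simp_all
  moreover have "h i \<in> S" "h (k + i) \<in> S"
    using h \<open>i < 2*k\<close> \<open>k + i < 2*k\<close> by (auto simp: bij_betw_def)
  ultimately have "h i \<in> V - P - W" "h (k + i) \<in> V - P - W"
    using \<open>S \<subseteq> V\<close> \<open>S \<inter> W = {}\<close> by auto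
  with \<open>h i \<noteq> h (k + i)\<close> have "(insert (h i) P \<in> X \<longleftrightarrow> insert (h (k + i)) P \<in> X)
      \<longleftrightarrow> (insert (h i) W \<in> X \<longleftrightarrow> insert (h (k + i)) W \<in> X)"
    using consistent[folded P_def] \<open>P \<in> nsets V (k - 1)\<close> \<open>P \<inter> W = {}\<close>
    by (simp add: inconsistent_swaps_def)
  moreover have "h ` chain_block k i = insert (h i) P"
    using insert_chain_block[OF \<open>i < k\<close>] unfolding P_def by (metis image_insert)
  moreover have "h ` chain_block k (Suc i) = insert (h (k + i)) P"
    using \<open>i < k\<close> by (simp add: P_def chain_block_Suc)
  ultimately show ?thesis
    by simp
qed

lemma image_insert_chain_block:
  fixes h :: "nat \<Rightarrow> 'a"
  assumes h: "bij_betw h {..<2*k} S" and "i < k"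
  shows "h ` insert (k + i) (chain_block k i) \<subseteq> S" and "card (h ` insert (k + i) (chain_block k i)) = Suc k"
proof -
  have I: "insert (k + i) (chain_block k i) \<subseteq> {..<2*k}"
    using chain_block_subset[of i k] \<open>i < k\<close> by auto
  then show "h ` insert (k + i) (chain_block k i) \<subseteq> S"
    using h by (metis bij_betw_def image_mono)
  have "card (insert (k + i) (chain_block k i)) = Suc k"
    using not_in_chain_block[of k i] \<open>i < k\<close> by simp
  moreover have "inj_on h (insert (k + i) (chain_block k i))"
    using h I by (meson bij_betw_def inj_on_subset)
  ultimately show "card (h ` insert (k + i) (chain_block k i)) = Suc k"
    by (simp only: card_image)
qed

lemma correct_set_if_no_defect:
  fixes h :: "nat \<Rightarrow> 'a"
  assumes h: "bij_betw h {..<2*k} S" and "S \<subseteq> V" "S \<inter> W = {}"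
    and halves: "(h ` {..<k}, h ` {k..<2*k}) \<notin> cut_errors (nsets V k) (splits_edge E) X"
    and swaps: "\<And>i. i < k \<Longrightarrow> (h ` (chain_block k i - {i}), h i, h (k + i)) \<notin> inconsistent_swaps V (k - 1) X W"
  shows "correct_set E {s \<in> V. insert s W \<in> X} (V - {s \<in> V. insert s W \<in> X}) S"
proof (rule correct_set_if_chain_parity[OF h \<open>S \<subseteq> V\<close>])
  have inj: "inj_on h {..<2*k}" and "h ` {..<2*k} \<subseteq> V"
    using h \<open>S \<subseteq> V\<close> by (auto simp: bij_betw_def)
  then have "h ` {..<k} \<in> nsets V k" "h ` {k..<2*k} \<in> nsets V k"
    using inj_on_subset[OF inj, of "{..<k}"] inj_on_subset[OF inj, of "{k..<2*k}"]
    by (auto simp: nsets_def card_image subset_eq)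
  then show "S \<in> E \<longleftrightarrow> (h ` {..<k} \<in> X) \<noteq> (h ` {k..<2*k} \<in> X)"
    using halves splits_edge_halves[OF h, of E] by (auto simp: cut_errors_def)
  show "(h ` chain_block k i \<in> X \<longleftrightarrow> h ` chain_block k (Suc i) \<in> X)
      \<longleftrightarrow> (insert (h i) W \<in> X \<longleftrightarrow> insert (h (k + i)) W \<in> X)" if "i < k" for i
    using chain_step_if_consistent[OF h \<open>S \<subseteq> V\<close> \<open>S \<inter> W = {}\<close> that swaps[OF that]] .
qed

definition enumeration :: "'a set \<Rightarrow> nat \<Rightarrow> 'a" where
  "enumeration S = (SOME h. bij_betw h {..<card S} S)"

lemma bij_betw_enumeration:
  assumes "finite S"
  shows "bij_betw (enumeration S) {..<card S} S"
proof -
  have "\<exists>h. bij_betw h {..<card S} S"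
    using ex_bij_betw_nat_finite[OF assms] by (simp add: atLeast0LessThan)
  then show ?thesis
    unfolding enumeration_def by (rule someI_ex)
qed

lemma bij_betw_enumeration_nsets:
  "S \<in> nsets V m \<Longrightarrow> bij_betw (enumeration S) {..<m} S"
  using bij_betw_enumeration[of S] by (auto simp: nsets_def)

lemma card_halves_in_le:
  fixes V :: "'a set"
  assumes "finite M"
  shows "card {S \<in> nsets V (2*k). (enumeration S ` {..<k}, enumeration S ` {k..<2*k}) \<in> M} \<le> card M"
proof (rule card_inj_on_le[OF _ _ assms])
  show "inj_on (\<lambda>S. (enumeration S ` {..<k}, enumeration S ` {k..<2*k}))
      {S \<in> nsets V (2*k). (enumeration S ` {..<k}, enumeration S ` {k..<2*k}) \<in> M}"
  proof (rule inj_on_inverseI[where g = "\<lambda>(C, D). C \<union> D"])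
    fix S assume "S \<in> {S \<in> nsets V (2*k). (enumeration S ` {..<k}, enumeration S ` {k..<2*k}) \<in> M}"
    then have "bij_betw (enumeration S) {..<2*k} S"
      using bij_betw_enumeration_nsets by blast
    then show "(\<lambda>(C, D). C \<union> D) (enumeration S ` {..<k}, enumeration S ` {k..<2*k}) = S"
      by (simp add: union_halves)
  qed
qed auto

(* S is determined by the swap read off from its enumeration and its k - 1 remaining elements. *)
lemma card_swaps_in_le:
  fixes V :: "'a set"
  assumes "finite V" "finite T" "i < k"
  shows "card {S \<in> nsets V (2*k).
      (enumeration S ` (chain_block k i - {i}), enumeration S i, enumeration S (k + i)) \<in> T}
    \<le> card T * (card V choose (k - 1))"
proof -
  define swap :: "'a set \<Rightarrow> 'a set \<times> 'a \<times> 'a" where "swap S = (enumeration S ` (chain_block k i - {i}), enumeration S i, enumeration S (k + i))" for S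
  define used :: "'a set \<Rightarrow> 'a set" where "used S = enumeration S ` insert (k + i) (chain_block k i)" for S
  have used: "used S = insert a (insert b P)" if "swap S = (P, a, b)" for S P a b
    using that insert_chain_block[OF \<open>i < k\<close>] unfolding swap_def used_def
    by (metis image_insert insert_commute prod.inject)
  have used_sub: "used S \<subseteq> S" and card_used: "card (used S) = Suc k" if "S \<in> nsets V (2*k)" for S
    using image_insert_chain_block[OF bij_betw_enumeration_nsets[OF that] \<open>i < k\<close>] by (simp_all add: used_def)
  let ?A = "{S \<in> nsets V (2*k). swap S \<in> T}"
  have "card ?A \<le> card (T \<times> nsets V (k - 1))"
  proof (rule card_inj_on_le[where f = "\<lambda>S. (swap S, S - used S)"])
    show "inj_on (\<lambda>S. (swap S, S - used S)) ?A"
    proof (rule inj_on_inverseI[where g = "\<lambda>((P, a, b), R). R \<union> insert a (insert b P)"])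
      fix S assume "S \<in> ?A"
      then show "(\<lambda>((P, a, b), R). R \<union> insert a (insert b P)) (swap S, S - used S) = S"
        using used used_sub[of S] by (cases "swap S") auto
    qed
    show "(\<lambda>S. (swap S, S - used S)) ` ?A \<subseteq> T \<times> nsets V (k - 1)"
    proof (rule image_subsetI)
      fix S assume "S \<in> ?A"
      then have "S \<in> nsets V (2*k)" "swap S \<in> T"
        by auto
      moreover from this have "card (S - used S) = k - 1"
        using used_sub[of S] card_used[of S] card_Diff_subset[of "used S" S] finite_subset[of "used S" S]
        by (simp add: nsets_def)
      ultimately show "(swap S, S - used S) \<in> T \<times> nsets V (k - 1)"
        by (auto simp: nsets_def)
    qed
    show "finite (T \<times> nsets V (k - 1))"
      using assms by (simp add: finite_imp_finite_nsets)
  qed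
  then show ?thesis
    by (simp add: card_cartesian_product swap_def)
qed

lemma card_incorrect_le_defects:
  fixes V :: "'a set" and X :: "'a set set"
  assumes "finite V" "1 \<le> k" "W \<in> nsets V (k - 1)"
  defines "V1 \<equiv> {s \<in> V. insert s W \<in> X}"
  shows "card {S \<in> nsets V (2*k). \<not> correct_set E V1 (V - V1) S}
    \<le> (k - 1) * card V ^ (2*k - 1) + card (cut_errors (nsets V k) (splits_edge E) X)
      + k * (card (inconsistent_swaps V (k - 1) X W) * (card V choose (k - 1)))"
proof -
  define M where "M = cut_errors (nsets V k) (splits_edge E) X"
  define Meet where "Meet = {S \<in> nsets V (2*k). S \<inter> W \<noteq> {}}"
  define Halves where "Halves = {S \<in> nsets V (2*k). (enumeration S ` {..<k}, enumeration S ` {k..<2*k}) \<in> M}"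
  define Swap where "Swap i = {S \<in> nsets V (2*k). (enumeration S ` (chain_block k i - {i}),
    enumeration S i, enumeration S (k + i)) \<in> inconsistent_swaps V (k - 1) X W}" for i
  have "S \<in> Meet \<union> Halves \<union> (\<Union>i<k. Swap i)"
    if S: "S \<in> nsets V (2*k)" "\<not> correct_set E V1 (V - V1) S" for S
  proof (rule ccontr)
    assume "S \<notin> Meet \<union> Halves \<union> (\<Union>i<k. Swap i)"
    then have "correct_set E V1 (V - V1) S"
      unfolding V1_def using S(1)
      by (intro correct_set_if_no_defect[OF bij_betw_enumeration_nsets[OF S(1)]])
        (auto simp: Meet_def Halves_def Swap_def M_def nsets_def)
    with S(2) show False ..
  qed
  then have "{S \<in> nsets V (2*k). \<not> correct_set E V1 (V - V1) S} \<subseteq> Meet \<union> Halves \<union> (\<Union>i<k. Swap i)"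
    by blast
  moreover have "finite (Meet \<union> Halves \<union> (\<Union>i<k. Swap i))"
    using \<open>finite V\<close> by (auto simp: Meet_def Halves_def Swap_def finite_imp_finite_nsets)
  ultimately have "card {S \<in> nsets V (2*k). \<not> correct_set E V1 (V - V1) S}
      \<le> card (Meet \<union> Halves \<union> (\<Union>i<k. Swap i))"
    by (rule card_mono[rotated])
  also have "\<dots> \<le> card Meet + card Halves + card (\<Union>i<k. Swap i)"
    using card_Un_le[of "Meet \<union> Halves" "\<Union>i<k. Swap i"] card_Un_le[of Meet Halves] by linarith
  also have "card (\<Union>i<k. Swap i) \<le> (\<Sum>i<k. card (Swap i))"
    by (rule card_UN_le) simp
  also have "\<dots> \<le> k * (card (inconsistent_swaps V (k - 1) X W) * (card V choose (k - 1)))"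
    using sum_bounded_above[of "{..<k}" "\<lambda>i. card (Swap i)"] card_swaps_in_le[OF \<open>finite V\<close>]
      finite_inconsistent_swaps[OF \<open>finite V\<close>] by (simp add: Swap_def)
  also have "card Meet \<le> (k - 1) * card V ^ (2*k - 1)"
    using card_nsets_meeting_le[of V "2*k" W] assms by (simp add: Meet_def nsets_def)
  also have "card Halves \<le> card M"
    unfolding Halves_def M_def using \<open>finite V\<close>
    by (intro card_halves_in_le) (auto simp: cut_errors_def finite_imp_finite_nsets intro: finite_subset)
  finally show ?thesis
    by (simp add: M_def)
qed

lemma card_incorrect_le_cut_errors:
  fixes V :: "'a set"
  assumes "finite V" "1 \<le> k" "k \<le> card V"
  shows "\<exists>V1\<subseteq>V. card {S \<in> nsets V (2*k). \<not> correct_set E V1 (V - V1) S}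
    \<le> (k - 1) * card V ^ (2*k - 1) + (1 + 2*k^3) * card (cut_errors (nsets V k) (splits_edge E) X)"
proof -
  obtain j where "k = Suc j"
    using \<open>1 \<le> k\<close> by (cases k) auto
  then obtain W where "W \<in> nsets V (k - 1)" and few_swaps:
    "(card V choose (k - 1)) * card (inconsistent_swaps V (k - 1) X W)
      \<le> 2 * k^2 * card (cut_errors (nsets V k) (splits_edge E) X)"
    using ex_few_inconsistent_swaps[OF \<open>finite V\<close>, of j X E] assms by auto
  then have "k * (card (inconsistent_swaps V (k - 1) X W) * (card V choose (k - 1)))
      \<le> 2 * k^3 * card (cut_errors (nsets V k) (splits_edge E) X)"
    by (simp add: mult.commute power3_eq_cube power2_eq_square mult_left_mono mult.left_commute)
  moreover have "card {S \<in> nsets V (2*k). \<not> correct_set E {s \<in> V. insert s W \<in> X} (V - {s \<in> V. insert s W \<in> X}) S}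
    \<le> (k - 1) * card V ^ (2*k - 1) + card (cut_errors (nsets V k) (splits_edge E) X)
      + k * (card (inconsistent_swaps V (k - 1) X W) * (card V choose (k - 1)))"
    using \<open>finite V\<close> \<open>1 \<le> k\<close> \<open>W \<in> nsets V (k - 1)\<close> by (rule card_incorrect_le_defects)
  ultimately show ?thesis
    by (intro exI[of _ "{s \<in> V. insert s W \<in> X}"]) (auto simp: ring_distribs)
qed

definition error_coeff :: "nat \<Rightarrow> real" where
  "error_coeff k = real (k - 1) + 9 / 2 * real (1 + 2*k^3)"

definition deficit_coeff :: "nat \<Rightarrow> real" where
  "deficit_coeff k = 9 * real (1 + 2*k^3) * real (2*k choose k)"

lemma deficit_coeff_pos: "deficit_coeff k > 0"
  unfolding deficit_coeff_def by (intro mult_pos_pos) (auto intro: add_pos_nonneg)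

lemma card_incorrect_sets_le:
  fixes V :: "'a set"
  assumes "finite V" "1 \<le> k" "k \<le> card V" "uniform_hypergraph (2*k) V E" "\<not> contains_C3 k V E"
  shows "\<exists>V1 V2. V1 \<union> V2 = V \<and> V1 \<inter> V2 = {} \<and>
    real (card {S. S \<subseteq> V \<and> card S = 2*k \<and> \<not> correct_set E V1 V2 S})
      \<le> error_coeff k * real (card V) ^ (2*k - 1)
        + deficit_coeff k * (real (card V choose (2*k)) / 2 - real (card E))"
proof -
  obtain X where X: "real (card (cut_errors (nsets V k) (splits_edge E) X))
      \<le> 9 * (real (card V) ^ (2*k - 1) / 2 + real (2*k choose k) * (real (card V choose (2*k)) / 2 - real (card E)))"
    using splits_edge_cut_errors_le[OF assms(1,2,4,5)] by blast
  obtain V1 where "V1 \<subseteq> V" and V1: "card {S \<in> nsets V (2*k). \<not> correct_set E V1 (V - V1) S}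
      \<le> (k - 1) * card V ^ (2*k - 1) + (1 + 2*k^3) * card (cut_errors (nsets V k) (splits_edge E) X)"
    using card_incorrect_le_cut_errors[OF assms(1-3)] by blast
  have "{S. S \<subseteq> V \<and> card S = 2*k \<and> \<not> correct_set E V1 (V - V1) S}
      = {S \<in> nsets V (2*k). \<not> correct_set E V1 (V - V1) S}"
    using \<open>finite V\<close> by (auto simp: nsets_def intro: finite_subset)
  then have "real (card {S. S \<subseteq> V \<and> card S = 2*k \<and> \<not> correct_set E V1 (V - V1) S})
      \<le> real ((k - 1) * card V ^ (2*k - 1) + (1 + 2*k^3) * card (cut_errors (nsets V k) (splits_edge E) X))"
    using V1 by (simp only: of_nat_le_iff)
  also have "\<dots> = real (k - 1) * real (card V) ^ (2*k - 1)
      + real (1 + 2*k^3) * real (card (cut_errors (nsets V k) (splits_edge E) X))"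
    by (simp only: of_nat_add[of "_ * _" "_ * _"] of_nat_mult of_nat_power)
  also have "\<dots> \<le> real (k - 1) * real (card V) ^ (2*k - 1) + real (1 + 2*k^3)
      * (9 * (real (card V) ^ (2*k - 1) / 2 + real (2*k choose k) * (real (card V choose (2*k)) / 2 - real (card E))))"
    using X by (intro add_left_mono mult_left_mono) simp_all
  also have "\<dots> = error_coeff k * real (card V) ^ (2*k - 1)
      + deficit_coeff k * (real (card V choose (2*k)) / 2 - real (card E))"
    by (simp add: error_coeff_def deficit_coeff_def field_simps)
  finally show ?thesis
    using \<open>V1 \<subseteq> V\<close> by (intro exI[of _ V1] exI[of _ "V - V1"]) auto
qed

lemma le_eps_mult_power:
  fixes \<epsilon> c1 c2 d :: real
  assumes "\<epsilon> > 0" "c2 > 0" "1 \<le> m" "2 * c1 / \<epsilon> \<le> real n" "d < \<epsilon> / (2 * c2) * real n ^ m"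
  shows "c1 * real n ^ (m - 1) + c2 * d \<le> \<epsilon> * real n ^ m"
proof -
  have "real n ^ m = real n * real n ^ (m - 1)"
    using \<open>1 \<le> m\<close> by (simp flip: power_Suc)
  moreover have "c1 \<le> \<epsilon> / 2 * real n"
    using assms(1,4) by (simp add: field_simps)
  then have "c1 * real n ^ (m - 1) \<le> \<epsilon> / 2 * real n * real n ^ (m - 1)"
    by (rule mult_right_mono) simp
  moreover have "c2 * d \<le> \<epsilon> / 2 * real n ^ m"
    using mult_strict_left_mono[OF assms(5) assms(2)] assms(2) by simp
  ultimately show ?thesis
    by simp
qed

lemma stability_for_large_n:
  assumes "1 \<le> k" "\<epsilon> > 0"
  shows "\<forall>n\<ge>nat \<lceil>2 * error_coeff k / \<epsilon>\<rceil> + k. \<forall>E :: nat set set.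
     uniform_hypergraph (2*k) {..<n} E \<and> \<not> contains_C3 k {..<n} E \<and>
     real (card E) > (1/2) * real (n choose (2*k)) - \<epsilon> / (2 * deficit_coeff k) * real n ^ (2*k) \<longrightarrow>
     (\<exists>V1 V2. V1 \<union> V2 = {..<n} \<and> V1 \<inter> V2 = {} \<and>
        real (card {S. S \<subseteq> {..<n} \<and> card S = 2*k \<and> \<not> correct_set E V1 V2 S}) \<le> \<epsilon> * real n ^ (2*k))"
proof (intro allI impI)
  fix n and E :: "nat set set"
  assume n: "n \<ge> nat \<lceil>2 * error_coeff k / \<epsilon>\<rceil> + k" and H: "uniform_hypergraph (2*k) {..<n} E \<and>
    \<not> contains_C3 k {..<n} E \<and>
    real (card E) > (1/2) * real (n choose (2*k)) - \<epsilon> / (2 * deficit_coeff k) * real n ^ (2*k)"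
  have "2 * error_coeff k / \<epsilon> \<le> real (nat \<lceil>2 * error_coeff k / \<epsilon>\<rceil>)"
    by (rule real_nat_ceiling_ge)
  also have "\<dots> \<le> real n"
    using n by (intro of_nat_mono) linarith
  finally have "error_coeff k * real n ^ (2*k - 1) + deficit_coeff k * (real (n choose (2*k)) / 2 - real (card E))
      \<le> \<epsilon> * real n ^ (2*k)"
    using H \<open>\<epsilon> > 0\<close> deficit_coeff_pos \<open>1 \<le> k\<close> by (intro le_eps_mult_power) (simp_all add: algebra_simps)
  moreover obtain V1 V2 where "V1 \<union> V2 = {..<n}" "V1 \<inter> V2 = {}"
    "real (card {S. S \<subseteq> {..<n} \<and> card S = 2*k \<and> \<not> correct_set E V1 V2 S})
      \<le> error_coeff k * real n ^ (2*k - 1) + deficit_coeff k * (real (n choose (2*k)) / 2 - real (card E))"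
    using card_incorrect_sets_le[of "{..<n}" k E] H \<open>1 \<le> k\<close> n by auto
  ultimately show "\<exists>V1 V2. V1 \<union> V2 = {..<n} \<and> V1 \<inter> V2 = {} \<and>
      real (card {S. S \<subseteq> {..<n} \<and> card S = 2*k \<and> \<not> correct_set E V1 V2 S}) \<le> \<epsilon> * real n ^ (2*k)"
    by (meson order_trans)
qed

theorem theorem3p3:
  fixes k :: nat
  assumes "k \<ge> 1"
  shows "\<forall>\<epsilon>::real. \<epsilon> > 0 \<longrightarrow> (\<exists>\<eta>::real. \<eta> > 0 \<and> (\<exists>N::nat. \<forall>n\<ge>N. \<forall>E :: nat set set.
     uniform_hypergraph (2*k) {..<n} E \<and> \<not> contains_C3 k {..<n} E \<and>
     real (card E) > (1/2) * real (n choose (2*k)) - \<eta> * real n ^ (2*k) \<longrightarrow>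
     (\<exists>V1 V2. V1 \<union> V2 = {..<n} \<and> V1 \<inter> V2 = {} \<and>
        real (card {S. S \<subseteq> {..<n} \<and> card S = 2*k \<and> \<not> correct_set E V1 V2 S})
          \<le> \<epsilon> * real n ^ (2*k))))"
proof (intro allI impI, rule exI, rule conjI)
  show "\<epsilon> / (2 * deficit_coeff k) > 0" if "\<epsilon> > 0" for \<epsilon> :: real
    using that deficit_coeff_pos by simp
qed (use stability_for_large_n[OF assms] in blast)

end
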